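(* Let $f\in\mathbb{C}[X_1,\dots,X_n]$ be a radical polynomial, i.e. $f=f_1f_2\cdots f_r$ with each $f_i$ irreducible and the $f_i$ pairwise non-associate. Let $A=\mathbb{C}[X_1,\dots,X_n]/(f)$ and let $\bar f_i$ denote the image of $f_i$ in $A$. If $D$ is a locally nilpotent derivation of $A$, then $D(\bar f_i)\in \bar f_iA$ for all $1\le i\le r$.
   Context: A derivation of a $\mathbb{C}$-algebra $A$ is a $\mathbb{C}$-linear map $D:A\to A$ with $D(ab)=aD(b)+D(a)b$; it is locally nilpotent if for every $a\in A$ there is $n\in\mathbb{N}$ with $D^n(a)=0$. *)

theory Defs
  imports "HOL-Algebra.QuotRing" "HOL-Algebra.Ring_Divisibility" "HOL-Library.Poly_Mapping"
begin

text \<open>Multivariate polynomials with complex coefficients: a polynomial is a finitely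
  supported map from monomials (finitely supported exponent vectors nat \<Rightarrow>0 nat) to
  coefficients; multiplication is the convolution product of Poly_Mapping.
  Variable X_(k+1) corresponds to index k.\<close>

type_synonym mpoly = "(nat \<Rightarrow>\<^sub>0 nat) \<Rightarrow>\<^sub>0 complex"

definition polys_in :: "nat \<Rightarrow> mpoly set" where
  "polys_in n = {p. \<forall>m \<in> Poly_Mapping.keys p. Poly_Mapping.keys m \<subseteq> {..<n}}"

definition poly_ring_n :: "nat \<Rightarrow> mpoly ring" where
  "poly_ring_n n = \<lparr>carrier = polys_in n, monoid.mult = (*), one = 1,
                    ring.zero = 0, add = (+)\<rparr>"

definition const_poly :: "complex \<Rightarrow> mpoly" where
  "const_poly c = Poly_Mapping.single 0 c"

text \<open>A C-linear derivation of a ring A whose C-algebra structure is given by the map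
  (scalar multiplication c \<cdot> x = emb c \<otimes> x).\<close>
definition is_C_derivation :: "('a, 'b) ring_scheme \<Rightarrow> (complex \<Rightarrow> 'a) \<Rightarrow> ('a \<Rightarrow> 'a) \<Rightarrow> bool" where
  "is_C_derivation A emb D \<longleftrightarrow>
     D \<in> carrier A \<rightarrow> carrier A \<and>
     (\<forall>x\<in>carrier A. \<forall>y\<in>carrier A. D (x \<oplus>\<^bsub>A\<^esub> y) = D x \<oplus>\<^bsub>A\<^esub> D y) \<and>
     (\<forall>c. \<forall>x\<in>carrier A. D (emb c \<otimes>\<^bsub>A\<^esub> x) = emb c \<otimes>\<^bsub>A\<^esub> D x) \<and>
     (\<forall>x\<in>carrier A. \<forall>y\<in>carrier A. D (x \<otimes>\<^bsub>A\<^esub> y) = x \<otimes>\<^bsub>A\<^esub> D y \<oplus>\<^bsub>A\<^esub> D x \<otimes>\<^bsub>A\<^esub> y)"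

definition locally_nilpotent :: "('a, 'b) ring_scheme \<Rightarrow> ('a \<Rightarrow> 'a) \<Rightarrow> bool" where
  "locally_nilpotent A D \<longleftrightarrow> (\<forall>a\<in>carrier A. \<exists>k::nat. (D ^^ k) a = \<zero>\<^bsub>A\<^esub>)"

end

theory Submission
  imports Defs "HOL-Computational_Algebra.Polynomial"
begin

(* Then 0 = D(f_i g) =
   f_i D(g) + D(f_i) g in A, so lifting to R, f_i divides a g for every representative a of
   D(f_i).  As R is a UFD, the irreducible f_i is prime, and it does not divide g (the factors
   are pairwise non-associate); hence f_i divides a, i.e. D(f_i) lies in f_i A.

   Gauss' lemma shows that B[X] is a UFD if B is;
   polynomials in N+1 variables are isomorphic to polynomials in one variable over those in
   N variables, and induction on N finishes. *)

section \<open>Divisibility relative to a subring\<close>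

definition subr :: "'a::comm_ring_1 set \<Rightarrow> bool" where
  "subr B \<longleftrightarrow> 0 \<in> B \<and> 1 \<in> B \<and> (\<forall>x\<in>B. \<forall>y\<in>B. x + y \<in> B \<and> x * y \<in> B \<and> - x \<in> B)"

definition dvdin :: "'a::comm_ring_1 set \<Rightarrow> 'a \<Rightarrow> 'a \<Rightarrow> bool" where
  "dvdin B a b \<longleftrightarrow> (\<exists>c\<in>B. b = a * c)"

definition unitin :: "'a::comm_ring_1 set \<Rightarrow> 'a \<Rightarrow> bool" where
  "unitin B a \<longleftrightarrow> a \<in> B \<and> dvdin B a 1"

definition irredin :: "'a::comm_ring_1 set \<Rightarrow> 'a \<Rightarrow> bool" where
  "irredin B p \<longleftrightarrow> p \<in> B \<and> p \<noteq> 0 \<and> \<not> unitin B p \<and>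
     (\<forall>a\<in>B. \<forall>b\<in>B. p = a * b \<longrightarrow> unitin B a \<or> unitin B b)"

definition primein :: "'a::comm_ring_1 set \<Rightarrow> 'a \<Rightarrow> bool" where
  "primein B p \<longleftrightarrow> p \<in> B \<and> p \<noteq> 0 \<and> \<not> unitin B p \<and>
     (\<forall>a\<in>B. \<forall>b\<in>B. dvdin B p (a * b) \<longrightarrow> dvdin B p a \<or> dvdin B p b)"

definition sdrel :: "'a::comm_ring_1 set \<Rightarrow> ('a \<times> 'a) set" where
  "sdrel B = {(a, b). a \<in> B \<and> b \<in> B \<and> a \<noteq> 0 \<and> b \<noteq> 0 \<and> dvdin B a b \<and> \<not> dvdin B b a}"

text \<open>A unique factorisation domain, characterised by the ascending chain condition on
  principal ideals together with primality of irreducible elements.\<close>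
definition ufdin :: "'a::comm_ring_1 set \<Rightarrow> bool" where
  "ufdin B \<longleftrightarrow> subr B \<and> wf (sdrel B) \<and> (\<forall>p. irredin B p \<longrightarrow> primein B p)"

lemma subrD:
  assumes "subr B"
  shows "0 \<in> B" "1 \<in> B" "x \<in> B \<Longrightarrow> y \<in> B \<Longrightarrow> x + y \<in> B"
    "x \<in> B \<Longrightarrow> y \<in> B \<Longrightarrow> x * y \<in> B" "x \<in> B \<Longrightarrow> - x \<in> B"
  using assms unfolding subr_def
  by auto

lemma subr_diff: "subr B \<Longrightarrow> x \<in> B \<Longrightarrow> y \<in> B \<Longrightarrow> x - y \<in> B"
  by (simp only: diff_conv_add_uminus subrD)

lemma subr_sum: "subr B \<Longrightarrow> (\<And>i. i \<in> I \<Longrightarrow> f i \<in> B) \<Longrightarrow> sum f I \<in> B"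
  by (induction I rule: infinite_finite_induct) (auto intro: subrD)

lemma subr_prod: "subr B \<Longrightarrow> (\<And>i. i \<in> I \<Longrightarrow> f i \<in> B) \<Longrightarrow> prod f I \<in> B"
  by (induction I rule: infinite_finite_induct) (auto intro: subrD)

lemma subr_power: "subr B \<Longrightarrow> x \<in> B \<Longrightarrow> x ^ k \<in> B"
  by (induction k) (auto intro: subrD)

lemma dvdin_refl: "subr B \<Longrightarrow> dvdin B a a"
  unfolding dvdin_def by (rule bexI[of _ 1]) (auto simp: subrD)

lemma dvdin_trans: "subr B \<Longrightarrow> dvdin B a b \<Longrightarrow> dvdin B b c \<Longrightarrow> dvdin B a c"
  unfolding dvdin_def by (auto simp: mult.assoc intro!: subrD(4))

lemma dvdin_mult_right: "subr B \<Longrightarrow> dvdin B a b \<Longrightarrow> c \<in> B \<Longrightarrow> dvdin B a (b * c)"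
  unfolding dvdin_def by (auto simp: mult.assoc intro!: subrD(4))

lemma dvdin_mult_left: "subr B \<Longrightarrow> dvdin B a b \<Longrightarrow> c \<in> B \<Longrightarrow> dvdin B a (c * b)"
  by (metis dvdin_mult_right mult.commute)

lemma dvdin_add: "subr B \<Longrightarrow> dvdin B a b \<Longrightarrow> dvdin B a c \<Longrightarrow> dvdin B a (b + c)"
  unfolding dvdin_def by (auto simp flip: distrib_left intro!: subrD(3))

lemma dvdin_diff: "subr B \<Longrightarrow> dvdin B a b \<Longrightarrow> dvdin B a c \<Longrightarrow> dvdin B a (b - c)"
  unfolding dvdin_def by (auto simp flip: right_diff_distrib intro!: subr_diff)

lemma dvdin_0: "subr B \<Longrightarrow> dvdin B a 0"
  unfolding dvdin_def by (auto intro: bexI[of _ 0] simp: subrD)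

lemma dvdin_sum: "subr B \<Longrightarrow> (\<And>i. i \<in> I \<Longrightarrow> dvdin B a (f i)) \<Longrightarrow> dvdin B a (sum f I)"
  by (induction I rule: infinite_finite_induct) (auto intro: dvdin_add dvdin_0)

lemma unitin_dvd: assumes "subr B" "unitin B u" "b \<in> B" shows "dvdin B u b"
proof -
  obtain c where "c \<in> B" "1 = u * c" using assms(2) unfolding unitin_def dvdin_def by blast
  then have "b = u * (c * b)" "c * b \<in> B" using subrD(4)[OF assms(1)] assms(3)
    by (auto simp: mult.assoc[symmetric])
  then show ?thesis unfolding dvdin_def by blast
qed

lemma sdrel_mult_nonunit:
  fixes p d :: "'a::idom"
  assumes B: "subr B" and p: "p \<in> B" "\<not> unitin B p" and d: "d \<in> B" "d \<noteq> 0" "p * d \<noteq> 0"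
  shows "(d, p * d) \<in> sdrel B"
proof -
  have "\<not> dvdin B (p * d) d"
  proof
    assume "dvdin B (p * d) d"
    then obtain e where e: "e \<in> B" "d = p * d * e" unfolding dvdin_def by auto
    then have "d * 1 = d * (p * e)" by (simp add: ac_simps)
    then have "1 = p * e" using d(2) by (subst (asm) mult_left_cancel) auto
    then show False using p e unfolding unitin_def dvdin_def by auto
  qed
  moreover have "dvdin B d (p * d)" unfolding dvdin_def using p by (auto simp: mult.commute)
  ultimately show ?thesis unfolding sdrel_def using B p d by (auto intro: subrD)
qed

text \<open>Well-foundedness of strict divisibility provides a prime factor of every non-unit:
  a divisor that is minimal for strict divisibility is irreducible, hence prime.\<close>
lemma prime_factor_exists:
  fixes d :: "'a::idom"
  assumes U: "ufdin B" and d: "d \<in> B" "d \<noteq> 0" "\<not> unitin B d"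
  shows "\<exists>p. primein B p \<and> dvdin B p d"
proof -
  have B: "subr B" and wf: "wf (sdrel B)" and ip: "\<And>p. irredin B p \<Longrightarrow> primein B p"
    using U unfolding ufdin_def by auto
  let ?S = "{x\<in>B. x \<noteq> 0 \<and> \<not> unitin B x \<and> dvdin B x d}"
  have dS: "d \<in> ?S" using d B by (auto intro: dvdin_refl)
  obtain m where m: "m \<in> ?S" and mmin: "\<And>y. (y, m) \<in> sdrel B \<Longrightarrow> y \<notin> ?S"
    using wfE_min[OF wf dS] by blast
  have "irredin B m"
    unfolding irredin_def
  proof (intro conjI ballI impI)
    show "m \<in> B" "m \<noteq> 0" "\<not> unitin B m" using m by auto
    fix a b assume a: "a \<in> B" and b: "b \<in> B" and mab: "m = a * b"
    show "unitin B a \<or> unitin B b"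
    proof (rule ccontr)
      assume nu: "\<not> (unitin B a \<or> unitin B b)"
      have a0: "a \<noteq> 0" using m mab by auto
      have "(a, b * a) \<in> sdrel B"
        using sdrel_mult_nonunit[OF B b _ a a0] nu m mab by (auto simp: mult.commute)
      then have "(a, m) \<in> sdrel B" using mab by (simp add: mult.commute)
      moreover have "a \<in> ?S"
      proof -
        have "dvdin B a m" using b mab unfolding dvdin_def by blast
        then show ?thesis using a a0 nu m dvdin_trans[OF B] by blast
      qed
      ultimately show False using mmin by blast
    qed
  qed
  then show ?thesis using ip m by blast
qed

lemma prime_dvd_prod:
  assumes B: "subr B" and p: "primein B p" and J: "finite J" and F: "\<And>j. j \<in> J \<Longrightarrow> F j \<in> B"
  shows "dvdin B p (prod F J) \<Longrightarrow> \<exists>j\<in>J. dvdin B p (F j)"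
  using J F
proof (induction J rule: finite_induct)
  case empty
  then show ?case using p unfolding primein_def unitin_def by auto
next
  case (insert x J)
  have "prod F (insert x J) = F x * prod F J" using insert by simp
  moreover have "prod F J \<in> B" using insert.prems by (intro subr_prod[OF B]) auto
  ultimately have "dvdin B p (F x) \<or> dvdin B p (prod F J)"
    using p insert unfolding primein_def by auto
  then show ?case using insert by auto
qed

lemma prime_dvd_irred_imp_dvd:
  assumes B: "subr B" and p: "primein B p" and q: "irredin B q" and pq: "dvdin B p q"
  shows "dvdin B q p"
proof -
  obtain u where u: "u \<in> B" "q = p * u" using pq unfolding dvdin_def by auto
  have "unitin B u" using q u p unfolding irredin_def primein_def by blast
  then obtain v where v: "v \<in> B" "1 = u * v" unfolding unitin_def dvdin_def by auto
  have "p = q * v" using u v by (simp add: mult.assoc)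
  then show ?thesis using v unfolding dvdin_def by blast
qed

section \<open>Gauss' lemma: polynomials over a UFD\<close>

definition PX :: "'a::comm_ring_1 set \<Rightarrow> 'a poly set" where
  "PX B = {p. \<forall>i. coeff p i \<in> B}"

lemma ufdinD:
  assumes "ufdin B"
  shows "subr B" "wf (sdrel B)" "irredin B p \<Longrightarrow> primein B p"
  using assms unfolding ufdin_def by auto

lemma PX_subr:
  assumes "subr B" shows "subr (PX B)"
  unfolding subr_def PX_def
  using assms by (auto simp: coeff_1 coeff_mult subrD intro!: subr_sum)

lemma PX_const[simp]: "subr B \<Longrightarrow> [:c:] \<in> PX B \<longleftrightarrow> c \<in> B"
  by (auto simp: PX_def coeff_pCons split: nat.splits simp: subrD)

lemma PX_smult: "subr B \<Longrightarrow> c \<in> B \<Longrightarrow> p \<in> PX B \<Longrightarrow> smult c p \<in> PX B"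
  by (auto simp: PX_def subrD)

lemma PX_monom: "subr B \<Longrightarrow> c \<in> B \<Longrightarrow> monom c k \<in> PX B"
  by (auto simp: PX_def coeff_monom subrD)

lemma PX_coeff: "p \<in> PX B \<Longrightarrow> coeff p i \<in> B"
  by (auto simp: PX_def)

lemma PX_closed:
  assumes B: "subr B"
  shows "p \<in> PX B \<Longrightarrow> q \<in> PX B \<Longrightarrow> p * q \<in> PX B"
    "p \<in> PX B \<Longrightarrow> q \<in> PX B \<Longrightarrow> p + q \<in> PX B"
    "p \<in> PX B \<Longrightarrow> q \<in> PX B \<Longrightarrow> p - q \<in> PX B"
    "0 \<in> PX B" "1 \<in> PX B"
  using subrD[OF PX_subr[OF B]] subr_diff[OF PX_subr[OF B]] by auto

lemma unitin_PX:
  fixes p :: "'a::idom poly"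
  assumes B: "subr B"
  shows "unitin (PX B) p \<longleftrightarrow> (\<exists>c. p = [:c:] \<and> unitin B c)"
proof
  assume "unitin (PX B) p"
  then obtain q where p: "p \<in> PX B" and q: "q \<in> PX B" and pq: "1 = p * q"
    unfolding unitin_def dvdin_def by auto
  then have "p \<noteq> 0" "q \<noteq> 0" by auto
  then have "degree p + degree q = 0" using pq degree_mult_eq[of p q] by simp
  then have "degree p = 0" "degree q = 0" by auto
  then obtain c d where c: "p = [:c:]" and d: "q = [:d:]" by (metis degree_eq_zeroE)
  have "c \<in> B" "d \<in> B" using p q c d B by auto
  moreover have "1 = c * d" proof -
    have "[:1:] = [:c * d:]" using pq c d by (simp only: one_pCons mult_to_poly)
    then show ?thesis by simp
  qed
  ultimately show "\<exists>c. p = [:c:] \<and> unitin B c" using c unfolding unitin_def dvdin_def by auto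
next
  assume "\<exists>c. p = [:c:] \<and> unitin B c"
  then obtain c d where "p = [:c:]" "c \<in> B" "d \<in> B" "1 = c * d"
    unfolding unitin_def dvdin_def by auto
  then show "unitin (PX B) p" unfolding unitin_def dvdin_def using B
    by (auto intro!: bexI[of _ "[:d:]"] simp: one_pCons)
qed

lemma dvdin_const_PX:
  fixes g :: "'a::idom poly"
  assumes B: "subr B" and g: "g \<in> PX B"
  shows "dvdin (PX B) [:p:] g \<longleftrightarrow> (\<forall>i. dvdin B p (coeff g i))"
proof
  assume "dvdin (PX B) [:p:] g"
  then obtain q where "q \<in> PX B" "g = smult p q" unfolding dvdin_def by auto
  then show "\<forall>i. dvdin B p (coeff g i)" by (auto simp: dvdin_def PX_def)
next
  assume "\<forall>i. dvdin B p (coeff g i)"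
  with g show "dvdin (PX B) [:p:] g"
  proof (induction g rule: pCons_induct)
    case 0 then show ?case using B by (auto simp: dvdin_def intro!: bexI[of _ 0] subrD)
  next
    case (pCons a g)
    have "g \<in> PX B" unfolding PX_def proof (safe)
      fix i show "coeff g i \<in> B" using pCons.prems(1) unfolding PX_def
        by (metis (mono_tags) coeff_pCons_Suc mem_Collect_eq)
    qed
    moreover have "\<forall>i. dvdin B p (coeff g i)"
    proof
      fix i show "dvdin B p (coeff g i)" using pCons.prems(2)[rule_format, of "Suc i"] by simp
    qed
    ultimately obtain q where q: "q \<in> PX B" "g = smult p q"
      using pCons.IH unfolding dvdin_def by auto
    obtain c where c: "c \<in> B" "a = p * c" using pCons.prems(2)[rule_format, of 0]
      by (auto simp: dvdin_def)
    have "pCons a g = smult p (pCons c q)" using q c by simp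
    moreover have "pCons c q \<in> PX B" using q c by (auto simp: PX_def coeff_pCons split: nat.splits)
    ultimately show ?case unfolding dvdin_def by (intro bexI[of _ "pCons c q"]) auto
  qed
qed

text \<open>If \<open>p\<close> divided neither
  factor, the coefficient of \<open>X\<^sup>i\<^sup>+\<^sup>j\<close> of the product (with \<open>i\<close>, \<open>j\<close> the first coefficients
  not divisible by \<open>p\<close>) would be \<open>g\<^sub>i h\<^sub>j\<close> plus multiples of \<open>p\<close>.\<close>
lemma prime_const_PX:
  fixes g h :: "'a::idom poly"
  assumes B: "subr B" and p: "primein B p" and g: "g \<in> PX B" and h: "h \<in> PX B"
    and dv: "dvdin (PX B) [:p:] (g * h)"
  shows "dvdin (PX B) [:p:] g \<or> dvdin (PX B) [:p:] h"
proof (rule ccontr)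
  assume nn: "\<not> (dvdin (PX B) [:p:] g \<or> dvdin (PX B) [:p:] h)"
  have gh: "g * h \<in> PX B" using PX_subr[OF B] g h by (auto dest: subrD)
  have exi: "\<exists>i. \<not> dvdin B p (coeff g i)" using nn dvdin_const_PX[OF B g] by auto
  define i where "i = (LEAST i. \<not> dvdin B p (coeff g i))"
  have i: "\<not> dvdin B p (coeff g i)" unfolding i_def using LeastI_ex[OF exi] .
  have imin: "\<And>k. k < i \<Longrightarrow> dvdin B p (coeff g k)" unfolding i_def using not_less_Least by blast
  have exj: "\<exists>j. \<not> dvdin B p (coeff h j)" using nn dvdin_const_PX[OF B h] by auto
  define j where "j = (LEAST j. \<not> dvdin B p (coeff h j))"
  have j: "\<not> dvdin B p (coeff h j)" unfolding j_def using LeastI_ex[OF exj] .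
  have jmin: "\<And>k. k < j \<Longrightarrow> dvdin B p (coeff h k)" unfolding j_def using not_less_Least by blast
  define T where "T k = coeff g k * coeff h (i + j - k)" for k
  have "coeff (g * h) (i + j) = (\<Sum>k\<le>i+j. T k)" unfolding T_def coeff_mult ..
  also have "\<dots> = T i + (\<Sum>k\<in>{..i+j} - {i}. T k)"
    by (subst sum.remove[of _ i]) auto
  finally have eq: "T i = coeff (g * h) (i + j) - (\<Sum>k\<in>{..i+j} - {i}. T k)" by simp
  have "dvdin B p (coeff (g * h) (i + j))" using dv dvdin_const_PX[OF B gh] by auto
  moreover have "dvdin B p (\<Sum>k\<in>{..i+j} - {i}. T k)"
  proof (rule dvdin_sum[OF B])
    fix k assume k: "k \<in> {..i+j} - {i}"
    show "dvdin B p (T k)"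
    proof (cases "k < i")
      case True
      then show ?thesis unfolding T_def by (intro dvdin_mult_right[OF B] imin PX_coeff[OF h])
    next
      case False
      then have "i + j - k < j" using k by auto
      then show ?thesis unfolding T_def by (intro dvdin_mult_left[OF B] jmin PX_coeff[OF g])
    qed
  qed
  ultimately have "dvdin B p (T i)" unfolding eq by (rule dvdin_diff[OF B])
  then have "dvdin B p (coeff g i * coeff h j)" unfolding T_def by simp
  then show False using p i j PX_coeff[OF g] PX_coeff[OF h] unfolding primein_def by blast
qed

lemma pseudo_div_PX:
  fixes f w :: "'a::idom poly"
  assumes B: "subr B" and f: "f \<in> PX B" and w: "w \<in> PX B" "w \<noteq> 0"
  shows "\<exists>k q r. q \<in> PX B \<and> r \<in> PX B \<and> smult (lead_coeff w ^ k) f = q * w + r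
            \<and> (r = 0 \<or> degree r < degree w)"
  using f
proof (induction "if f = 0 then 0 else Suc (degree f)" arbitrary: f rule: less_induct)
  case less
  show ?case
  proof (cases "f = 0 \<or> degree f < degree w")
    case True
    then show ?thesis using less.prems B
      by (intro exI[of _ 0] exI[of _ 0] exI[of _ f]) (auto simp: PX_closed)
  next
    case False
    then have f0: "f \<noteq> 0" and dfw: "degree w \<le> degree f" by auto
    define c where "c = lead_coeff w"
    define a where "a = lead_coeff f"
    define m where "m = degree f - degree w"
    define f' where "f' = smult c f - monom a m * w"
    have cB: "c \<in> B" "a \<in> B" unfolding c_def a_def using w less.prems by (auto intro: PX_coeff)
    have f'B: "f' \<in> PX B" unfolding f'_def
      using PX_closed[OF B] PX_smult[OF B] PX_monom[OF B] cB w less.prems by auto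
    have dle: "degree f' \<le> degree f"
    proof -
      have "degree (monom a m * w) \<le> degree f"
        using degree_mult_le[of "monom a m" w] degree_monom_le[of a m] dfw unfolding m_def by linarith
      then show ?thesis unfolding f'_def
        by (meson degree_diff_le degree_smult_le order.trans)
    qed
    have cf: "coeff f' (degree f) = 0"
      unfolding f'_def using dfw by (simp add: coeff_monom_mult c_def a_def m_def)
    have "f' = 0 \<or> degree f' < degree f"
      using degree_less_if_less_eqI[OF dle cf] by blast
    then have lt: "(if f' = 0 then 0 else Suc (degree f')) < (if f = 0 then 0 else Suc (degree f))"
      using f0 by auto
    obtain k q r where qr: "q \<in> PX B" "r \<in> PX B" "smult (c ^ k) f' = q * w + r"
      "r = 0 \<or> degree r < degree w"
      using less.hyps[OF lt f'B] unfolding c_def by blast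
    have "smult (c ^ Suc k) f = smult (c ^ k) (f' + monom a m * w)"
      unfolding f'_def by (simp add: mult.commute)
    also have "\<dots> = (q + smult (c ^ k) (monom a m)) * w + r"
      using qr(3) by (simp add: algebra_simps smult_add_right)
    finally show ?thesis
      using qr PX_closed[OF B] PX_smult[OF B] PX_monom[OF B] cB subr_power[OF B] unfolding c_def
      by (intro exI[of _ "Suc k"] exI[of _ "q + smult (c ^ k) (monom a m)"] exI[of _ r]) 
         (auto simp: c_def)
  qed
qed

text \<open>The prime factors of \<open>d\<close> are removed one at a
  time (each divides \<open>q\<close> or \<open>w\<close> by Gauss' lemma), by well-founded induction on \<open>d\<close>.\<close>
lemma cancel_const_PX:
  fixes f q w :: "'a::idom poly"
  assumes U: "ufdin B"
  shows "d \<in> B \<Longrightarrow> d \<noteq> 0 \<Longrightarrow> f \<in> PX B \<Longrightarrow> q \<in> PX B \<Longrightarrow> w \<in> PX B \<Longrightarrow> smult d f = q * w \<Longrightarrow>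
    \<exists>q1 w1. q1 \<in> PX B \<and> w1 \<in> PX B \<and> f = q1 * w1 \<and> degree w1 = degree w \<and> dvdin (PX B) w1 w"
proof (induction d arbitrary: q w rule: wf_induct_rule[OF ufdinD(2)[OF U]])
  case (1 d)
  have B: "subr B" using ufdinD(1)[OF U] .
  note PB = PX_subr[OF B]
  show ?case
  proof (cases "unitin B d")
    case True
    then obtain e where e: "e \<in> B" "1 = d * e" unfolding unitin_def dvdin_def by auto
    have "f = smult e (smult d f)" using e by (simp add: mult.commute)
    also have "\<dots> = smult e q * w" using 1 by simp
    finally show ?thesis using 1 e PX_smult[OF B] dvdin_refl[OF PB]
      by (intro exI[of _ "smult e q"] exI[of _ w]) auto
  next
    case False
    obtain p where p: "primein B p" "dvdin B p d" using prime_factor_exists[OF U] 1 False by blast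
    then obtain d' where d': "d' \<in> B" "d = p * d'" unfolding dvdin_def by auto
    have p0: "p \<noteq> 0" "p \<in> B" "\<not> unitin B p" using p unfolding primein_def by auto
    have d'0: "d' \<noteq> 0" using 1 d' by auto
    have rel: "(d', d) \<in> sdrel B" using sdrel_mult_nonunit[OF B p0(2,3) d'(1) d'0] 1 d' by simp
    have eq: "q * w = smult p (smult d' f)" using 1 d' by simp
    have "dvdin (PX B) [:p:] (q * w)" unfolding eq dvdin_def
      using PX_smult[OF B d'(1) \<open>f \<in> PX B\<close>]
      by (intro bexI[of _ "smult d' f"]) (auto simp: mult.commute)
    then have "dvdin (PX B) [:p:] q \<or> dvdin (PX B) [:p:] w"
      using prime_const_PX[OF B p(1)] 1 by blast
    then show ?thesis
    proof
      assume "dvdin (PX B) [:p:] q"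
      then obtain q2 where q2: "q2 \<in> PX B" "q = smult p q2"
        unfolding dvdin_def by auto
      have "smult p (smult d' f) = smult p (q2 * w)" using eq q2 by simp
      then have "smult d' f = q2 * w" by (rule smult_cancel[OF p0(1)])
      then show ?thesis using "1.IH"[OF rel d'(1) d'0 \<open>f \<in> PX B\<close> q2(1) \<open>w \<in> PX B\<close>] by blast
    next
      assume "dvdin (PX B) [:p:] w"
      then obtain w2 where w2: "w2 \<in> PX B" "w = smult p w2"
        unfolding dvdin_def by auto
      have "smult p (smult d' f) = smult p (q * w2)" using eq w2 by simp
      then have "smult d' f = q * w2" by (rule smult_cancel[OF p0(1)])
      then obtain q1 w1 where r: "q1 \<in> PX B" "w1 \<in> PX B" "f = q1 * w1" "degree w1 = degree w2"
        "dvdin (PX B) w1 w2"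
        using "1.IH"[OF rel d'(1) d'0 \<open>f \<in> PX B\<close> \<open>q \<in> PX B\<close> w2(1)] by blast
      have "dvdin (PX B) w2 w" unfolding dvdin_def w2(2) using p0 PB B
        by (auto intro!: bexI[of _ "[:p:]"] simp: mult.commute)
      then have "dvdin (PX B) w1 w" using dvdin_trans[OF PB r(5)] by blast
      moreover have "degree w1 = degree w" using r(4) w2(2) p0 by simp
      ultimately show ?thesis using r by blast
    qed
  qed
qed

definition primpoly :: "'a::comm_ring_1 set \<Rightarrow> 'a poly \<Rightarrow> bool" where
  "primpoly B f \<longleftrightarrow> (\<forall>p. primein B p \<longrightarrow> \<not> dvdin (PX B) [:p:] f)"

lemma cancel_prim_PX:
  fixes f h q :: "'a::idom poly"
  assumes U: "ufdin B" and d: "d \<in> B" "d \<noteq> 0" and f: "f \<in> PX B" and h: "h \<in> PX B"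
    and q: "q \<in> PX B" and eq: "smult d h = q * f" and pr: "primpoly B f"
  shows "dvdin (PX B) f h"
proof -
  have B: "subr B" using ufdinD(1)[OF U] .
  note PB = PX_subr[OF B]
  show ?thesis
  proof (cases "f = 0")
    case True
    then have "h = 0" using eq d by simp
    then show ?thesis using dvdin_0[OF PB] by simp
  next
    case f0: False
    obtain q1 w1 where r: "q1 \<in> PX B" "w1 \<in> PX B" "h = q1 * w1" "degree w1 = degree f"
      "dvdin (PX B) w1 f"
      using cancel_const_PX[OF U d h q f eq] by blast
    obtain s where s: "s \<in> PX B" "f = w1 * s" using r(5) unfolding dvdin_def by auto
    have "s \<noteq> 0" "w1 \<noteq> 0" using s f0 by auto
    then have "degree s = 0" using degree_mult_eq[of w1 s] s(2) r(4) by simp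
    then obtain \<sigma> where \<sigma>: "s = [:\<sigma>:]" by (metis degree_eq_zeroE)
    have \<sigma>B: "\<sigma> \<in> B" "\<sigma> \<noteq> 0" using s \<sigma> B \<open>s \<noteq> 0\<close> by auto
    show ?thesis
    proof (cases "unitin B \<sigma>")
      case True
      then obtain e where e: "e \<in> B" "1 = \<sigma> * e" unfolding unitin_def dvdin_def by auto
      have "w1 = smult e f" using s(2) \<sigma> e by (simp add: mult.commute)
      then have "h = f * smult e q1" using r(3) by (simp add: ac_simps)
      then show ?thesis unfolding dvdin_def using PX_smult[OF B e(1) r(1)] by blast
    next
      case False
      then obtain p where p: "primein B p" "dvdin B p \<sigma>" using prime_factor_exists[OF U \<sigma>B] by blast
      then obtain \<tau> where \<tau>: "\<tau> \<in> B" "\<sigma> = p * \<tau>" unfolding dvdin_def by auto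
      have "f = [:p:] * smult \<tau> w1" using s(2) \<sigma> \<tau> by (simp add: ac_simps)
      then have "dvdin (PX B) [:p:] f" unfolding dvdin_def using PX_smult[OF B \<tau>(1) r(2)] by blast
      then show ?thesis using pr p unfolding primpoly_def by blast
    qed
  qed
qed

lemma irred_PX_primpoly:
  fixes f :: "'a::idom poly"
  assumes B: "subr B" and irr: "irredin (PX B) f" and deg: "degree f > 0"
  shows "primpoly B f"
  unfolding primpoly_def
proof (intro allI impI notI)
  fix p assume p: "primein B p" and dv: "dvdin (PX B) [:p:] f"
  then obtain s where s: "s \<in> PX B" "f = [:p:] * s" unfolding dvdin_def by auto
  have "[:p:] \<in> PX B" using p B unfolding primein_def by auto
  then have "unitin (PX B) [:p:] \<or> unitin (PX B) s" using irr s unfolding irredin_def by blast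
  then show False
  proof
    assume "unitin (PX B) [:p:]"
    then show False using p unitin_PX[OF B] unfolding primein_def by auto
  next
    assume "unitin (PX B) s"
    then obtain c where "s = [:c:]" using unitin_PX[OF B] by auto
    then show False using deg s by simp
  qed
qed

definition combs :: "'a::comm_ring_1 set \<Rightarrow> 'a poly \<Rightarrow> 'a poly \<Rightarrow> 'a poly set" where
  "combs B f g = {u * f + v * g | u v. u \<in> PX B \<and> v \<in> PX B}"

lemma combs_PX:
  assumes B: "subr B" and "f \<in> PX B" "g \<in> PX B" "x \<in> combs B f g"
  shows "x \<in> PX B"
proof -
  obtain u v where "u \<in> PX B" "v \<in> PX B" "x = u * f + v * g"
    using assms(4) unfolding combs_def by blast
  then show ?thesis using assms(2,3) PX_closed(1,2)[OF B] by simp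
qed

lemma combs_generators:
  assumes B: "subr B"
  shows "f \<in> combs B f g" "g \<in> combs B f g"
proof -
  have "f = 1 * f + 0 * g" "g = 0 * f + 1 * g" by simp_all
  then show "f \<in> combs B f g" "g \<in> combs B f g"
    unfolding combs_def using PX_closed(4,5)[OF B] by blast+
qed

text \<open>A nonzero combination \<open>w\<close> of least degree pseudo-divides every combination: the
  pseudo-remainder is again a combination, of smaller degree, hence zero.\<close>
lemma pseudo_divides_combs:
  fixes f g w x :: "'a::idom poly"
  assumes B: "subr B" and f: "f \<in> PX B" and g: "g \<in> PX B"
    and w: "w \<in> combs B f g" "w \<noteq> 0"
    and wmin: "\<And>y. y \<in> combs B f g \<Longrightarrow> y \<noteq> 0 \<Longrightarrow> degree w \<le> degree y"
    and x: "x \<in> combs B f g"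
  shows "\<exists>k q. q \<in> PX B \<and> smult (lead_coeff w ^ k) x = q * w"
proof -
  have wP: "w \<in> PX B" and xP: "x \<in> PX B" using combs_PX[OF B f g] w x by auto
  obtain k q r where qr: "q \<in> PX B" "r \<in> PX B" "smult (lead_coeff w ^ k) x = q * w + r"
    "r = 0 \<or> degree r < degree w"
    using pseudo_div_PX[OF B xP wP w(2)] by blast
  obtain u v where uv: "u \<in> PX B" "v \<in> PX B" "w = u * f + v * g" using w unfolding combs_def by auto
  obtain u' v' where u'v': "u' \<in> PX B" "v' \<in> PX B" "x = u' * f + v' * g"
    using x unfolding combs_def by auto
  define c where "c = lead_coeff w ^ k"
  have cB: "c \<in> B" unfolding c_def using subr_power[OF B PX_coeff[OF wP]] .
  have "r = smult c x - q * w" using qr(3) unfolding c_def by simp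
  also have "\<dots> = (smult c u' - q * u) * f + (smult c v' - q * v) * g"
    using u'v'(3) uv(3) by (simp add: algebra_simps smult_add_right)
  finally have r: "r = (smult c u' - q * u) * f + (smult c v' - q * v) * g" .
  have "smult c u' - q * u \<in> PX B" "smult c v' - q * v \<in> PX B"
    using cB u'v' uv qr(1) PX_closed[OF B] PX_smult[OF B] by auto
  then have "r \<in> combs B f g" unfolding combs_def r by blast
  then have "r = 0" using wmin[of r] qr(4) by (cases "r = 0") auto
  then show ?thesis using qr by (auto simp: c_def)
qed

text \<open>An irreducible \<open>f\<close> that is pseudo-divided by a \<open>w\<close> of positive degree divides \<open>w\<close>:
  cancelling the constant leaves \<open>f = q\<^sub>1 w\<^sub>1\<close> with \<open>deg w\<^sub>1 = deg w > 0\<close>, so \<open>q\<^sub>1\<close> is a unit.\<close>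
lemma irred_dvd_pseudo_divisor:
  fixes f w :: "'a::idom poly"
  assumes U: "ufdin B" and irr: "irredin (PX B) f" and w: "w \<in> PX B" "degree w > 0"
    and c: "c \<in> B" "c \<noteq> 0" and q: "q \<in> PX B" and eq: "smult c f = q * w"
  shows "dvdin (PX B) f w"
proof -
  have B: "subr B" using ufdinD(1)[OF U] .
  have f: "f \<in> PX B" using irr unfolding irredin_def by auto
  obtain q1 w1 where r: "q1 \<in> PX B" "w1 \<in> PX B" "f = q1 * w1" "degree w1 = degree w"
    "dvdin (PX B) w1 w"
    using cancel_const_PX[OF U c f q w(1) eq] by blast
  have "unitin (PX B) q1 \<or> unitin (PX B) w1" using irr r unfolding irredin_def by blast
  moreover have "\<not> unitin (PX B) w1" using r(4) w(2) unitin_PX[OF B] by auto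
  ultimately obtain c where c: "q1 = [:c:]" "unitin B c" using unitin_PX[OF B] by auto
  then obtain e where e: "e \<in> B" "1 = c * e" unfolding unitin_def dvdin_def by auto
  have "w1 = f * [:e:]" using r(3) c e by (simp add: mult.commute)
  then have "dvdin (PX B) f w1" unfolding dvdin_def using e B by (intro bexI[of _ "[:e:]"]) auto
  then show ?thesis using dvdin_trans[OF PX_subr[OF B] _ r(5)] by blast
qed

text \<open>Suppose \<open>f | g h\<close> but \<open>f \<nmid> g\<close>,
  and let \<open>w\<close> be a nonzero combination of \<open>f\<close>, \<open>g\<close> of least degree.  If \<open>w\<close> is a constant
  \<open>e\<close>, then \<open>e h\<close> is a multiple of \<open>f\<close> and primitivity gives \<open>f | h\<close>.  Otherwise \<open>w\<close>
  pseudo-divides \<open>f\<close>, so \<open>f | w\<close>, and since \<open>w\<close> pseudo-divides \<open>g\<close> we would get \<open>f | g\<close>.\<close>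
lemma irred_PX_prime_pos:
  fixes f :: "'a::idom poly"
  assumes U: "ufdin B" and irr: "irredin (PX B) f" and deg: "degree f > 0"
  shows "primein (PX B) f"
  unfolding primein_def
proof (intro conjI ballI impI)
  have B: "subr B" using ufdinD(1)[OF U] .
  show f: "f \<in> PX B" "f \<noteq> 0" "\<not> unitin (PX B) f" using irr unfolding irredin_def by auto
  have pr: "primpoly B f" by (rule irred_PX_primpoly[OF B irr deg])
  fix g h assume g: "g \<in> PX B" and h: "h \<in> PX B" and dv: "dvdin (PX B) f (g * h)"
  obtain t where t: "t \<in> PX B" "g * h = f * t" using dv unfolding dvdin_def by auto
  have "dvdin (PX B) f h" if ng: "\<not> dvdin (PX B) f g"
  proof -
    obtain w where w: "w \<in> combs B f g" "w \<noteq> 0"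
      and wmin: "\<And>y. y \<in> combs B f g \<Longrightarrow> y \<noteq> 0 \<Longrightarrow> degree w \<le> degree y"
      using ex_has_least_nat[of "\<lambda>w. w \<in> combs B f g \<and> w \<noteq> 0" f degree]
        combs_generators(1)[OF B] f(2) by blast
    have wP: "w \<in> PX B" using combs_PX[OF B f(1) g w(1)] .
    obtain u v where uv: "u \<in> PX B" "v \<in> PX B" "w = u * f + v * g" using w unfolding combs_def by auto
    have lc: "lead_coeff w ^ k \<in> B" "lead_coeff w ^ k \<noteq> 0" for k
      using w(2) subr_power[OF B PX_coeff[OF wP]] by auto
    have pseudo: "\<exists>k q. q \<in> PX B \<and> smult (lead_coeff w ^ k) x = q * w"
      if "x \<in> combs B f g" for x
      using pseudo_divides_combs[OF B f(1) g w(1,2)] wmin that by blast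
    show "dvdin (PX B) f h"
    proof (cases "degree w = 0")
      case True
      then obtain e where e: "w = [:e:]" by (metis degree_eq_zeroE)
      have "smult e h = w * h" using e by simp
      also have "\<dots> = (u * h + v * t) * f" using uv(3) t(2) by (simp add: algebra_simps)
      finally have "smult e h = (u * h + v * t) * f" .
      moreover have "u * h + v * t \<in> PX B" using uv h t PX_closed[OF B] by auto
      ultimately show ?thesis using cancel_prim_PX[OF U _ _ f(1) h _ _ pr] e w(2) wP B by auto
    next
      case False
      obtain kf qf where "qf \<in> PX B" "smult (lead_coeff w ^ kf) f = qf * w"
        using pseudo[OF combs_generators(1)[OF B]] by blast
      then have "dvdin (PX B) f w" using irred_dvd_pseudo_divisor[OF U irr wP _ lc] False by blast
      then obtain s where s: "s \<in> PX B" "w = f * s" unfolding dvdin_def by auto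
      obtain kg qg where qg: "qg \<in> PX B" "smult (lead_coeff w ^ kg) g = qg * w"
        using pseudo[OF combs_generators(2)[OF B]] by blast
      have "smult (lead_coeff w ^ kg) g = (qg * s) * f" using qg(2) s(2) by (simp add: ac_simps)
      then have "dvdin (PX B) f g"
        using cancel_prim_PX[OF U lc f(1) g _ _ pr] qg(1) s(1) PX_closed[OF B] by blast
      then show ?thesis using ng by blast
    qed
  qed
  then show "dvdin (PX B) f g \<or> dvdin (PX B) f h" by blast
qed

text \<open>Irreducible constants are irreducible, hence prime, in \<open>B\<close>; by Gauss' lemma they are
  prime in \<open>B[X]\<close>.\<close>
lemma irred_PX_prime_0:
  fixes f :: "'a::idom poly"
  assumes U: "ufdin B" and irr: "irredin (PX B) f" and deg: "degree f = 0"
  shows "primein (PX B) f"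
proof -
  have B: "subr B" and ip: "\<And>p. irredin B p \<Longrightarrow> primein B p" using ufdinD[OF U] by auto
  obtain c where c: "f = [:c:]" using deg by (metis degree_eq_zeroE)
  have f: "f \<in> PX B" "f \<noteq> 0" "\<not> unitin (PX B) f" using irr unfolding irredin_def by auto
  have "irredin B c" unfolding irredin_def
  proof (intro conjI ballI impI)
    show "c \<in> B" "c \<noteq> 0" using f c B by auto
    show "\<not> unitin B c" using f c unitin_PX[OF B] by auto
    fix a b assume ab: "a \<in> B" "b \<in> B" "c = a * b"
    then have "f = [:a:] * [:b:]" using c by simp
    moreover have "[:a:] \<in> PX B" "[:b:] \<in> PX B" using ab B by auto
    ultimately have "unitin (PX B) [:a:] \<or> unitin (PX B) [:b:]" using irr unfolding irredin_def by blast
    then show "unitin B a \<or> unitin B b" using unitin_PX[OF B] by auto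
  qed
  then have pc: "primein B c" by (rule ip)
  show ?thesis unfolding primein_def
  proof (intro conjI f ballI impI)
    fix g h assume "g \<in> PX B" "h \<in> PX B" "dvdin (PX B) f (g * h)"
    then show "dvdin (PX B) f g \<or> dvdin (PX B) f h"
      using prime_const_PX[OF B pc] c by blast
  qed
qed

text \<open>Strict divisibility in \<open>B[X]\<close> decreases the degree, or keeps it and strictly
  divides the leading coefficient in \<open>B\<close>; so it is well-founded whenever it is in \<open>B\<close>.\<close>
lemma wf_sdrel_PX:
  fixes B :: "'a::idom set"
  assumes B: "subr B" and wf: "wf (sdrel B)"
  shows "wf (sdrel (PX B))"
proof (rule wf_subset)
  show "wf (inv_image (less_than <*lex*> sdrel B) (\<lambda>p. (degree p, lead_coeff p)))"
    using wf by (intro wf_inv_image wf_lex_prod wf_less_than)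
  show "sdrel (PX B) \<subseteq> inv_image (less_than <*lex*> sdrel B) (\<lambda>p. (degree p, lead_coeff p))"
  proof
    fix z assume z: "z \<in> sdrel (PX B)"
    obtain a b where zab: "z = (a, b)" by (cases z)
    have ab: "(a, b) \<in> sdrel (PX B)" using z zab by simp
    then have a: "a \<in> PX B" "a \<noteq> 0" and b: "b \<in> PX B" "b \<noteq> 0"
      and ndv: "\<not> dvdin (PX B) b a" and dv: "dvdin (PX B) a b"
      unfolding sdrel_def by auto
    obtain s where s: "s \<in> PX B" "b = a * s" using dv unfolding dvdin_def by auto
    have s0: "s \<noteq> 0" using s b by auto
    have dg: "degree b = degree a + degree s" using s a s0 degree_mult_eq by blast
    have "((degree a, lead_coeff a), (degree b, lead_coeff b)) \<in> less_than <*lex*> sdrel B"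
    proof (cases "degree s = 0")
      case False
      then show ?thesis using dg by auto
    next
      case True
      then obtain \<sigma> where \<sigma>: "s = [:\<sigma>:]" by (metis degree_eq_zeroE)
      have bs: "b = smult \<sigma> a" using s \<sigma> by (simp add: mult.commute)
      have \<sigma>B: "\<sigma> \<in> B" "\<sigma> \<noteq> 0" using s \<sigma> s0 B by auto
      have lcb: "lead_coeff b = lead_coeff a * \<sigma>" using bs by (simp add: mult.commute)
      have lB: "lead_coeff a \<in> B" "lead_coeff b \<in> B" using a b by (auto intro: PX_coeff)
      have l0: "lead_coeff a \<noteq> 0" "lead_coeff b \<noteq> 0" using a b by auto
      have "\<not> dvdin B (lead_coeff b) (lead_coeff a)"
      proof
        assume "dvdin B (lead_coeff b) (lead_coeff a)"
        then obtain \<tau> where \<tau>: "\<tau> \<in> B" "lead_coeff a = lead_coeff b * \<tau>" unfolding dvdin_def by auto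
        then have "lead_coeff a * 1 = lead_coeff a * (\<sigma> * \<tau>)" using lcb by (simp add: ac_simps)
        then have st: "\<sigma> * \<tau> = 1" using l0 by (subst (asm) mult_left_cancel) auto
        have "a = b * [:\<tau>:]" using bs st by (simp add: mult.commute)
        moreover have "[:\<tau>:] \<in> PX B" using \<tau> B by simp
        ultimately have "dvdin (PX B) b a" unfolding dvdin_def by blast
        then show False using ndv by blast
      qed
      moreover have "dvdin B (lead_coeff a) (lead_coeff b)" unfolding dvdin_def using lcb \<sigma>B by auto
      ultimately have "(lead_coeff a, lead_coeff b) \<in> sdrel B" unfolding sdrel_def using lB l0 by auto
      then show ?thesis using dg True by auto
    qed
    then show "z \<in> inv_image (less_than <*lex*> sdrel B) (\<lambda>p. (degree p, lead_coeff p))"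
      using zab by simp
  qed
qed

theorem ufdin_PX:
  fixes B :: "'a::idom set"
  assumes U: "ufdin B"
  shows "ufdin (PX B)"
proof -
  have B: "subr B" and wf: "wf (sdrel B)" using ufdinD[OF U] by auto
  show ?thesis unfolding ufdin_def
  proof (intro conjI allI impI)
    show "subr (PX B)" by (rule PX_subr[OF B])
    show "wf (sdrel (PX B))" by (rule wf_sdrel_PX[OF B wf])
    fix p assume "irredin (PX B) p"
    then show "primein (PX B) p"
      using irred_PX_prime_0[OF U] irred_PX_prime_pos[OF U] by (cases "degree p = 0") auto
  qed
qed

section \<open>Polynomials in finitely many variables form a UFD\<close>

lemma polys_in_add: "x \<in> polys_in N \<Longrightarrow> y \<in> polys_in N \<Longrightarrow> x + y \<in> polys_in N"
  unfolding polys_in_def using keys_add[of x y] by blast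

lemma polys_in_mult: "x \<in> polys_in N \<Longrightarrow> y \<in> polys_in N \<Longrightarrow> x * y \<in> polys_in N"
  unfolding polys_in_def
proof (intro CollectI ballI, elim CollectE)
  fix m assume x: "\<forall>m\<in>Poly_Mapping.keys x. Poly_Mapping.keys m \<subseteq> {..<N}"
     and y: "\<forall>m\<in>Poly_Mapping.keys y. Poly_Mapping.keys m \<subseteq> {..<N}"
     and "m \<in> Poly_Mapping.keys (x * y)"
  then obtain a b where "m = a + b" "a \<in> Poly_Mapping.keys x" "b \<in> Poly_Mapping.keys y"
    using keys_mult[of x y] by blast
  then show "Poly_Mapping.keys m \<subseteq> {..<N}" using x y keys_add[of a b] by blast
qed

lemma polys_in_uminus: "x \<in> polys_in N \<Longrightarrow> - x \<in> polys_in N"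
  unfolding polys_in_def by simp

lemma polys_in_0: "0 \<in> polys_in N" and polys_in_1: "1 \<in> polys_in N"
  unfolding polys_in_def by auto

lemma polys_in_subr: "subr (polys_in N)"
  unfolding subr_def using polys_in_add polys_in_mult polys_in_uminus polys_in_0 polys_in_1 by blast

lemma polys_in_mono: assumes "N \<le> M" shows "polys_in N \<subseteq> polys_in M"
  using assms by (auto simp: polys_in_def subset_iff) (meson less_le_trans)

text \<open>The variable \<open>X\<^sub>N\<^sub>+\<^sub>1\<close> (index \<open>N\<close>) and evaluation of a polynomial over \<open>C[X\<^sub>1,...,X\<^sub>N]\<close>
  at it; this identifies \<open>C[X\<^sub>1,...,X\<^sub>N][X]\<close> with \<open>C[X\<^sub>1,...,X\<^sub>N\<^sub>+\<^sub>1]\<close>.\<close>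
definition Var :: "nat \<Rightarrow> mpoly" where
  "Var N = Poly_Mapping.single (Poly_Mapping.single N 1) 1"

definition evN :: "nat \<Rightarrow> mpoly poly \<Rightarrow> mpoly" where
  "evN N q = poly q (Var N)"

lemma Var_pow: "Var N ^ k = Poly_Mapping.single (Poly_Mapping.single N k) 1"
proof (induction k)
  case 0 then show ?case by simp
next
  case (Suc k)
  have "Var N ^ Suc k = Var N * Var N ^ k" by simp
  also have "\<dots> = Var N * Poly_Mapping.single (Poly_Mapping.single N k) 1" using Suc by simp
  also have "\<dots> = Poly_Mapping.single (Poly_Mapping.single N 1 + Poly_Mapping.single N k) 1"
    unfolding Var_def by (simp add: mult_single)
  also have "Poly_Mapping.single N 1 + Poly_Mapping.single N k = Poly_Mapping.single N (Suc k)"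
    by (simp add: single_add[symmetric])
  finally show ?case .
qed

lemma Var_pow_in: "Var N ^ k \<in> polys_in (Suc N)"
  unfolding Var_pow polys_in_def by auto

lemma evN_in:
  assumes q: "q \<in> PX (polys_in N)"
  shows "evN N q \<in> polys_in (Suc N)"
proof -
  have "evN N q = (\<Sum>i\<le>degree q. coeff q i * Var N ^ i)" unfolding evN_def poly_altdef ..
  also have "\<dots> \<in> polys_in (Suc N)"
  proof (rule subr_sum[OF polys_in_subr])
    fix i
    have "coeff q i \<in> polys_in (Suc N)" using PX_coeff[OF q] polys_in_mono[of N "Suc N"] by auto
    then show "coeff q i * Var N ^ i \<in> polys_in (Suc N)"
      using subrD(4)[OF polys_in_subr] Var_pow_in by blast
  qed
  finally show ?thesis .
qed

lemma evN_mult: "evN N (p * q) = evN N p * evN N q"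
  unfolding evN_def by simp
lemma evN_1: "evN N 1 = 1"
  unfolding evN_def by simp
lemma evN_0: "evN N 0 = 0"
  unfolding evN_def by simp
lemma evN_add: "evN N (p + q) = evN N p + evN N q"
  unfolding evN_def by simp

lemma update_as_add:
  fixes f :: "'a \<Rightarrow>\<^sub>0 'b::monoid_add"
  assumes "a \<notin> Poly_Mapping.keys f"
  shows "Poly_Mapping.update a c f = f + Poly_Mapping.single a c"
  using assms
  by (intro poly_mapping_eqI) (auto simp: lookup_update lookup_add lookup_single in_keys_iff when_def)

lemma lookup_mult_single_shift:
  fixes f :: mpoly and k m :: "nat \<Rightarrow>\<^sub>0 nat" and b :: complex
  shows "poly_mapping.lookup (f * Poly_Mapping.single k b) (m + k) = poly_mapping.lookup f m * b"
proof (induction f rule: update_induct)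
  case const then show ?case by simp
next
  case (update f a c)
  have "poly_mapping.lookup (Poly_Mapping.update a c f * Poly_Mapping.single k b) (m + k)
      = poly_mapping.lookup (f * Poly_Mapping.single k b) (m + k) + poly_mapping.lookup (Poly_Mapping.single (a + k) (c * b)) (m + k)"
    using update.hyps by (simp add: update_as_add distrib_right lookup_add mult_single)
  also have "\<dots> = poly_mapping.lookup f m * b + (c * b when a = m)"
    using update.IH update.hyps(1) by (auto simp: lookup_single when_def not_in_keys_iff_lookup_eq_zero)
  also have "\<dots> = poly_mapping.lookup (Poly_Mapping.update a c f) m * b"
    using update.hyps(1) by (auto simp: lookup_update when_def not_in_keys_iff_lookup_eq_zero)
  finally show ?case .
qed

lemma lookup_mult_single_zero:
  fixes f :: mpoly and k n :: "nat \<Rightarrow>\<^sub>0 nat" and b :: complex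
  assumes "\<And>l. l \<in> Poly_Mapping.keys f \<Longrightarrow> n \<noteq> l + k"
  shows "poly_mapping.lookup (f * Poly_Mapping.single k b) n = 0"
proof -
  have "n \<notin> Poly_Mapping.keys (f * Poly_Mapping.single k b)"
    using keys_mult[of f "Poly_Mapping.single k b"] assms by (auto split: if_splits)
  then show ?thesis by (simp add: in_keys_iff)
qed

lemma evN_lookup:
  fixes q :: "mpoly poly" and m :: "nat \<Rightarrow>\<^sub>0 nat"
  assumes q: "q \<in> PX (polys_in N)" and m: "Poly_Mapping.keys m \<subseteq> {..<N}"
  shows "poly_mapping.lookup (evN N q) (m + Poly_Mapping.single N i) = poly_mapping.lookup (coeff q i) m"
proof -
  have key: "poly_mapping.lookup (coeff q j * Var N ^ j) (m + Poly_Mapping.single N i) =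
    (if j = i then poly_mapping.lookup (coeff q i) m else 0)" for j
  proof (cases "j = i")
    case True
    then show ?thesis unfolding Var_pow by (simp add: lookup_mult_single_shift)
  next
    case False
    have "poly_mapping.lookup (coeff q j * Poly_Mapping.single (Poly_Mapping.single N j) 1) (m + Poly_Mapping.single N i) = 0"
    proof (rule lookup_mult_single_zero)
      fix l assume l: "l \<in> Poly_Mapping.keys (coeff q j)"
      have lN: "Poly_Mapping.keys l \<subseteq> {..<N}" using PX_coeff[OF q, of j] l unfolding polys_in_def by auto
      show "m + Poly_Mapping.single N i \<noteq> l + Poly_Mapping.single N j"
      proof
        assume "m + Poly_Mapping.single N i = l + Poly_Mapping.single N j"
        then have "poly_mapping.lookup (m + Poly_Mapping.single N i) N = poly_mapping.lookup (l + Poly_Mapping.single N j) N" by simp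
        moreover have "N \<notin> Poly_Mapping.keys m" "N \<notin> Poly_Mapping.keys l" using m lN by auto
        then have "poly_mapping.lookup m N = 0" "poly_mapping.lookup l N = 0"
          by (simp_all add: not_in_keys_iff_lookup_eq_zero)
        ultimately have "i = j" by (simp add: lookup_add)
        then show False using False by simp
      qed
    qed
    then show ?thesis using False unfolding Var_pow by simp
  qed
  have "poly_mapping.lookup (evN N q) (m + Poly_Mapping.single N i)
      = (\<Sum>j\<le>degree q. poly_mapping.lookup (coeff q j * Var N ^ j) (m + Poly_Mapping.single N i))"
    unfolding evN_def poly_altdef by (simp add: lookup_sum)
  also have "\<dots> = (\<Sum>j\<le>degree q. if j = i then poly_mapping.lookup (coeff q i) m else 0)"
    using key by simp
  also have "\<dots> = poly_mapping.lookup (coeff q i) m"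
    by (cases "i \<le> degree q") (auto simp: coeff_eq_0)
  finally show ?thesis .
qed

lemma evN_inj0:
  fixes q :: "mpoly poly"
  assumes q: "q \<in> PX (polys_in N)" and z: "evN N q = 0"
  shows "q = 0"
proof (rule poly_eqI)
  fix i
  show "coeff q i = coeff 0 i"
  proof (simp, rule poly_mapping_eqI)
    fix m
    show "poly_mapping.lookup (coeff q i) m = poly_mapping.lookup 0 m"
    proof (cases "m \<in> Poly_Mapping.keys (coeff q i)")
      case True
      then have "Poly_Mapping.keys m \<subseteq> {..<N}" using PX_coeff[OF q, of i] unfolding polys_in_def by auto
      then show ?thesis using evN_lookup[OF q] z by (metis lookup_zero)
    next
      case False
      then show ?thesis by (simp add: in_keys_iff)
    qed
  qed
qed

lemma split_monomial:
  fixes a :: "nat \<Rightarrow>\<^sub>0 nat"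
  shows "a = Poly_Mapping.update N 0 a + Poly_Mapping.single N (poly_mapping.lookup a N)"
  by (intro poly_mapping_eqI) (auto simp: lookup_update lookup_add lookup_single when_def)

lemma evN_surj:
  fixes p :: mpoly
  shows "p \<in> polys_in (Suc N) \<Longrightarrow> \<exists>q\<in>PX (polys_in N). evN N q = p"
proof (induction p rule: update_induct)
  case const
  then show ?case using PX_closed(4)[OF polys_in_subr] evN_0 by blast
next
  case (update f a b)
  have upd: "Poly_Mapping.update a b f = f + Poly_Mapping.single a b"
    using update.hyps(1) by (rule update_as_add)
  have kf: "Poly_Mapping.keys (Poly_Mapping.update a b f) = insert a (Poly_Mapping.keys f)"
    using update.hyps(2) by (simp add: keys_update)
  have "f \<in> polys_in (Suc N)" using update.prems kf unfolding polys_in_def by auto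
  then obtain qf where qf: "qf \<in> PX (polys_in N)" "evN N qf = f" using update.IH by blast
  have ka: "Poly_Mapping.keys a \<subseteq> {..<Suc N}" using update.prems kf unfolding polys_in_def by auto
  define a' where "a' = Poly_Mapping.update N 0 a"
  define k where "k = poly_mapping.lookup a N"
  have a'N: "Poly_Mapping.keys a' \<subseteq> {..<N}" using ka unfolding a'_def
    by (auto simp: keys_update less_Suc_eq)
  have sB: "Poly_Mapping.single a' b \<in> polys_in N" using a'N unfolding polys_in_def by auto
  have "Poly_Mapping.single a b = Poly_Mapping.single a' b * Var N ^ k"
    unfolding Var_pow a'_def k_def by (simp add: mult_single split_monomial[of a N, symmetric])
  also have "\<dots> = evN N (monom (Poly_Mapping.single a' b) k)"
    unfolding evN_def by (simp add: poly_monom)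
  finally have "Poly_Mapping.update a b f = evN N (qf + monom (Poly_Mapping.single a' b) k)"
    using upd qf by (simp add: evN_add)
  moreover have "qf + monom (Poly_Mapping.single a' b) k \<in> PX (polys_in N)"
    using PX_closed(2)[OF polys_in_subr] qf PX_monom[OF polys_in_subr sB] by blast
  ultimately show ?case by metis
qed

lemma evN_bij: "bij_betw (evN N) (PX (polys_in N)) (polys_in (Suc N))"
  unfolding bij_betw_def
proof
  show "inj_on (evN N) (PX (polys_in N))"
  proof (rule inj_onI)
    fix x y assume x: "x \<in> PX (polys_in N)" and y: "y \<in> PX (polys_in N)" and e: "evN N x = evN N y"
    have "x - y \<in> PX (polys_in N)" using PX_closed(3)[OF polys_in_subr] x y by blast
    moreover have "evN N (x - y) = 0" using e unfolding evN_def by simp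
    ultimately have "x - y = 0" by (rule evN_inj0)
    then show "x = y" by simp
  qed
  show "evN N ` PX (polys_in N) = polys_in (Suc N)"
    using evN_in evN_surj by blast
qed

text \<open>The base case: polynomials in no variables are the constants, a field.\<close>
lemma polys_in_0_const:
  assumes "p \<in> polys_in 0"
  shows "p = Poly_Mapping.single 0 (poly_mapping.lookup p 0)"
proof (rule poly_mapping_eqI)
  fix m :: "nat \<Rightarrow>\<^sub>0 nat"
  show "poly_mapping.lookup p m = poly_mapping.lookup (Poly_Mapping.single 0 (poly_mapping.lookup p 0)) m"
  proof (cases "m = 0")
    case True then show ?thesis by simp
  next
    case False
    then have "m \<notin> Poly_Mapping.keys p" using assms unfolding polys_in_def by auto
    then show ?thesis using False by (simp add: lookup_single when_def not_in_keys_iff_lookup_eq_zero)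
  qed
qed

lemma polys_in_0_unit:
  assumes p: "p \<in> polys_in 0" "p \<noteq> 0"
  shows "unitin (polys_in 0) p"
proof -
  define c where "c = poly_mapping.lookup p 0"
  have pc: "p = Poly_Mapping.single 0 c" unfolding c_def by (rule polys_in_0_const[OF p(1)])
  have c0: "c \<noteq> 0" using p(2) pc by auto
  have "p * Poly_Mapping.single 0 (1 / c) = 1" using c0 unfolding pc by (simp add: mult_single)
  moreover have "Poly_Mapping.single 0 (1 / c) \<in> polys_in 0" unfolding polys_in_def by auto
  ultimately show ?thesis using p unfolding unitin_def dvdin_def by metis
qed

lemma ufdin_polys_in_0: "ufdin (polys_in 0)"
  unfolding ufdin_def
proof (intro conjI allI impI)
  show "subr (polys_in 0)" by (rule polys_in_subr)
  have "sdrel (polys_in 0) = {}"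
    unfolding sdrel_def using polys_in_0_unit unitin_dvd[OF polys_in_subr] by blast
  then show "wf (sdrel (polys_in 0))" by simp
  fix p assume "irredin (polys_in 0) p"
  then show "primein (polys_in 0) p" unfolding irredin_def using polys_in_0_unit by blast
qed

locale subring_iso =
  fixes \<phi> :: "'a::comm_ring_1 \<Rightarrow> 'b::comm_ring_1" and A :: "'a set" and C :: "'b set"
  assumes subr_A: "subr A" and bij: "bij_betw \<phi> A C"
    and hom: "\<And>x y. x \<in> A \<Longrightarrow> y \<in> A \<Longrightarrow> \<phi> (x * y) = \<phi> x * \<phi> y"
    and one: "\<phi> 1 = 1" and zero: "\<phi> 0 = 0"
begin

lemma closed: "x \<in> A \<Longrightarrow> \<phi> x \<in> C"
  using bij bij_betwE by blast

lemma preimage: obtains a where "c \<in> C \<Longrightarrow> a \<in> A \<and> \<phi> a = c"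
  using bij by (metis bij_betw_imp_surj_on imageE)

lemma inj_iff: "x \<in> A \<Longrightarrow> y \<in> A \<Longrightarrow> \<phi> x = \<phi> y \<longleftrightarrow> x = y"
  using bij unfolding bij_betw_def inj_on_def by blast

lemma zero_iff: "x \<in> A \<Longrightarrow> \<phi> x = 0 \<longleftrightarrow> x = 0"
  using inj_iff[of x 0] zero subrD(1)[OF subr_A] by simp

lemma dvdin_iff:
  assumes x: "x \<in> A" and y: "y \<in> A"
  shows "dvdin C (\<phi> x) (\<phi> y) \<longleftrightarrow> dvdin A x y"
proof
  assume "dvdin C (\<phi> x) (\<phi> y)"
  then obtain c where c: "c \<in> C" "\<phi> y = \<phi> x * c" unfolding dvdin_def by auto
  obtain a where a: "a \<in> A" "\<phi> a = c" using preimage c(1) by metis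
  have "\<phi> y = \<phi> (x * a)" using c a hom[OF x a(1)] by simp
  then have "y = x * a" using inj_iff x y a(1) subrD(4)[OF subr_A] by blast
  then show "dvdin A x y" using a(1) unfolding dvdin_def by blast
next
  assume "dvdin A x y"
  then obtain a where "a \<in> A" "y = x * a" unfolding dvdin_def by auto
  then show "dvdin C (\<phi> x) (\<phi> y)" using hom x closed unfolding dvdin_def by auto
qed

lemma unitin_iff: "x \<in> A \<Longrightarrow> unitin C (\<phi> x) \<longleftrightarrow> unitin A x"
  unfolding unitin_def using dvdin_iff[of x 1] one subrD(2)[OF subr_A] closed by auto

lemma factorisations_iff:
  assumes x: "x \<in> A"
  shows "(\<forall>a\<in>C. \<forall>b\<in>C. \<phi> x = a * b \<longrightarrow> unitin C a \<or> unitin C b) \<longleftrightarrow>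
         (\<forall>a\<in>A. \<forall>b\<in>A. x = a * b \<longrightarrow> unitin A a \<or> unitin A b)"
proof
  assume h: "\<forall>a\<in>C. \<forall>b\<in>C. \<phi> x = a * b \<longrightarrow> unitin C a \<or> unitin C b"
  show "\<forall>a\<in>A. \<forall>b\<in>A. x = a * b \<longrightarrow> unitin A a \<or> unitin A b"
    using h hom closed unitin_iff by metis
next
  assume h: "\<forall>a\<in>A. \<forall>b\<in>A. x = a * b \<longrightarrow> unitin A a \<or> unitin A b"
  show "\<forall>a\<in>C. \<forall>b\<in>C. \<phi> x = a * b \<longrightarrow> unitin C a \<or> unitin C b"
  proof (intro ballI impI)
    fix c d assume cd: "c \<in> C" "d \<in> C" "\<phi> x = c * d"
    obtain a b where ab: "a \<in> A" "\<phi> a = c" "b \<in> A" "\<phi> b = d" using preimage cd(1,2) by metis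
    then have "x = a * b" using cd(3) hom inj_iff x subrD(4)[OF subr_A] by metis
    then show "unitin C c \<or> unitin C d" using h ab unitin_iff by blast
  qed
qed

lemma irredin_iff: "x \<in> A \<Longrightarrow> irredin C (\<phi> x) \<longleftrightarrow> irredin A x"
  unfolding irredin_def using closed zero_iff unitin_iff factorisations_iff by blast

lemma primein_image:
  assumes x: "x \<in> A" and p: "primein A x"
  shows "primein C (\<phi> x)"
  unfolding primein_def
proof (intro conjI ballI impI)
  show "\<phi> x \<in> C" "\<phi> x \<noteq> 0" "\<not> unitin C (\<phi> x)"
    using p x closed zero_iff unitin_iff unfolding primein_def by auto
  fix c d assume cd: "c \<in> C" "d \<in> C" "dvdin C (\<phi> x) (c * d)"
  obtain a b where ab: "a \<in> A" "\<phi> a = c" "b \<in> A" "\<phi> b = d" using preimage cd(1,2) by metis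
  then have "dvdin A x (a * b)" using cd(3) hom dvdin_iff x subrD(4)[OF subr_A] by metis
  then have "dvdin A x a \<or> dvdin A x b" using p ab unfolding primein_def by blast
  then show "dvdin C (\<phi> x) c \<or> dvdin C (\<phi> x) d" using dvdin_iff x ab by metis
qed

text \<open>Strict divisibility in \<open>C\<close> is the preimage of strict divisibility in \<open>A\<close>.\<close>
lemma wf_sdrel:
  assumes wfA: "wf (sdrel A)"
  shows "wf (sdrel C)"
proof (rule wf_subset)
  define \<psi> where "\<psi> = inv_into A \<phi>"
  have \<psi>: "\<psi> c \<in> A" "\<phi> (\<psi> c) = c" if "c \<in> C" for c
    unfolding \<psi>_def using bij that by (metis bij_betw_imp_surj_on inv_into_into f_inv_into_f)+
  show "wf (inv_image (sdrel A) \<psi>)" using wfA by (rule wf_inv_image)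
  show "sdrel C \<subseteq> inv_image (sdrel A) \<psi>"
  proof (clarsimp simp: sdrel_def)
    fix a b assume ab: "a \<in> C" "b \<in> C" "a \<noteq> 0" "b \<noteq> 0" "dvdin C a b" "\<not> dvdin C b a"
    then show "\<psi> a \<in> A \<and> \<psi> b \<in> A \<and> \<psi> a \<noteq> 0 \<and> \<psi> b \<noteq> 0 \<and> dvdin A (\<psi> a) (\<psi> b) \<and> \<not> dvdin A (\<psi> b) (\<psi> a)"
      using \<psi>[OF ab(1)] \<psi>[OF ab(2)] dvdin_iff zero by metis
  qed
qed

theorem ufdin_transfer:
  assumes U: "ufdin A" and S: "subr C"
  shows "ufdin C"
  unfolding ufdin_def
proof (intro conjI S wf_sdrel[OF ufdinD(2)[OF U]] allI impI)
  fix p assume p: "irredin C p"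
  then obtain x where x: "x \<in> A" "\<phi> x = p" using preimage unfolding irredin_def by metis
  then have "primein A x" using p irredin_iff ufdinD(3)[OF U] by blast
  then show "primein C p" using primein_image x by blast
qed

end

theorem ufdin_polys_in: "ufdin (polys_in N)"
proof (induction N)
  case 0 then show ?case by (rule ufdin_polys_in_0)
next
  case (Suc N)
  interpret subring_iso "evN N" "PX (polys_in N)" "polys_in (Suc N)"
    using PX_subr[OF polys_in_subr] evN_bij evN_mult evN_1 evN_0 by unfold_locales
  show ?case by (rule ufdin_transfer[OF ufdin_PX[OF Suc] polys_in_subr])
qed

lemma poly_ring_n_simps [simp]:
  "carrier (poly_ring_n n) = polys_in n"
  "mult (poly_ring_n n) = (*)"
  "add (poly_ring_n n) = (+)"
  "one (poly_ring_n n) = 1"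
  "zero (poly_ring_n n) = 0"
  by (simp_all add: poly_ring_n_def)

lemma cring_poly_ring_n: "cring (poly_ring_n n)"
proof (rule cringI)
  show "abelian_group (poly_ring_n n)"
  proof (rule abelian_groupI)
    show "\<And>x y. x \<in> carrier (poly_ring_n n) \<Longrightarrow> y \<in> carrier (poly_ring_n n) \<Longrightarrow>
      x \<oplus>\<^bsub>poly_ring_n n\<^esub> y \<in> carrier (poly_ring_n n)" by (simp add: polys_in_add)
    show "\<zero>\<^bsub>poly_ring_n n\<^esub> \<in> carrier (poly_ring_n n)" by (simp add: polys_in_0)
  next
    fix x assume x: "x \<in> carrier (poly_ring_n n)"
    show "\<exists>y\<in>carrier (poly_ring_n n). y \<oplus>\<^bsub>poly_ring_n n\<^esub> x = \<zero>\<^bsub>poly_ring_n n\<^esub>"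
      using x polys_in_uminus by (intro bexI[of _ "- x"]) auto
  qed (auto simp: add_ac)
  show "Group.comm_monoid (poly_ring_n n)"
    by (rule comm_monoidI) (auto simp: polys_in_mult polys_in_1 mult_ac)
  show "\<And>x y z. x \<in> carrier (poly_ring_n n) \<Longrightarrow> y \<in> carrier (poly_ring_n n) \<Longrightarrow> z \<in> carrier (poly_ring_n n) \<Longrightarrow>
       (x \<oplus>\<^bsub>poly_ring_n n\<^esub> y) \<otimes>\<^bsub>poly_ring_n n\<^esub> z = x \<otimes>\<^bsub>poly_ring_n n\<^esub> z \<oplus>\<^bsub>poly_ring_n n\<^esub> y \<otimes>\<^bsub>poly_ring_n n\<^esub> z"
    by (simp add: distrib_right)
qed

lemma units_poly_ring_n: "x \<in> Units (poly_ring_n n) \<longleftrightarrow> unitin (polys_in n) x"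
  unfolding Units_def unitin_def dvdin_def by (auto simp: mult.commute)

lemma divides_poly_ring_n: "a divides\<^bsub>poly_ring_n n\<^esub> b \<longleftrightarrow> dvdin (polys_in n) a b"
  unfolding factor_def dvdin_def by simp

lemma irred_poly_ring_n:
  assumes "p \<in> carrier (poly_ring_n n)" and "ring_irreducible\<^bsub>poly_ring_n n\<^esub> p"
  shows "irredin (polys_in n) p"
proof -
  let ?R = "poly_ring_n n"
  have p0: "p \<noteq> 0" and irr: "Divisibility.irreducible ?R p" using assms(2) unfolding ring_irreducible_def by auto
  have nu: "\<not> unitin (polys_in n) p" using irr units_poly_ring_n unfolding Divisibility.irreducible_def by blast
  show ?thesis unfolding irredin_def
  proof (intro conjI ballI impI)
    show "p \<in> polys_in n" "p \<noteq> 0" "\<not> unitin (polys_in n) p" using assms p0 nu by auto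
    fix a b assume a: "a \<in> polys_in n" and b: "b \<in> polys_in n" and pab: "p = a * b"
    show "unitin (polys_in n) a \<or> unitin (polys_in n) b"
    proof (rule disjCI)
      assume nb: "\<not> unitin (polys_in n) b"
      have "a divides\<^bsub>?R\<^esub> p" unfolding factor_def using b pab by auto
      moreover have "\<not> p divides\<^bsub>?R\<^esub> a"
      proof
        assume "p divides\<^bsub>?R\<^esub> a"
        then obtain e where e: "e \<in> polys_in n" "a = p * e" unfolding factor_def by auto
        have "p * (e * b) = (p * e) * b" by (simp add: mult.assoc)
        also have "\<dots> = p" using e(2) pab by simp
        finally have "p * (e * b) = p * 1" by simp
        then have "e * b = 1" using p0 by simp
        then have "unitin (polys_in n) b" using b e unfolding unitin_def dvdin_def by (auto simp: mult.commute)
        then show False using nb by blast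
      qed
      ultimately have "properfactor ?R a p" unfolding properfactor_def by blast
      then have "a \<in> Units ?R" using irr a unfolding Divisibility.irreducible_def by auto
      then show "unitin (polys_in n) a" using units_poly_ring_n by blast
    qed
  qed
qed

text \<open>In the factorisation \<open>f = f\<^sub>1 \<cdots> f\<^sub>r\<close> into pairwise non-associate irreducibles, each
  \<open>f\<^sub>i\<close> is prime (unique factorisation) and divides none of the other factors, so \<open>f\<^sub>i\<close>
  is prime to the cofactor \<open>\<Prod>\<^sub>j\<^sub>\<noteq>\<^sub>i f\<^sub>j\<close>.\<close>
lemma factor_coprime_product:
  fixes fs :: "nat \<Rightarrow> mpoly"
  assumes i: "i < r"
    and carrier: "\<And>i. i < r \<Longrightarrow> fs i \<in> carrier (poly_ring_n n)"
    and irred: "\<And>i. i < r \<Longrightarrow> ring_irreducible\<^bsub>poly_ring_n n\<^esub> (fs i)"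
    and nonassoc: "\<And>i j. i < r \<Longrightarrow> j < r \<Longrightarrow> i \<noteq> j \<Longrightarrow> \<not> (fs i \<sim>\<^bsub>poly_ring_n n\<^esub> fs j)"
    and a: "a \<in> carrier (poly_ring_n n)"
    and dvd: "fs i divides\<^bsub>poly_ring_n n\<^esub> (a \<otimes>\<^bsub>poly_ring_n n\<^esub> (\<Prod>j\<in>{..<r} - {i}. fs j))"
  shows "fs i divides\<^bsub>poly_ring_n n\<^esub> a"
proof -
  let ?P = "polys_in n" and ?g = "\<Prod>j\<in>{..<r} - {i}. fs j"
  have B: "subr ?P" by (rule polys_in_subr)
  have fsP: "\<And>j. j < r \<Longrightarrow> fs j \<in> ?P" using carrier by simp
  have irr: "\<And>j. j < r \<Longrightarrow> irredin ?P (fs j)" using irred_poly_ring_n carrier irred by blast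
  have prime: "primein ?P (fs i)" using ufdin_polys_in irr[OF i] unfolding ufdin_def by blast
  have "\<not> dvdin ?P (fs i) ?g"
  proof
    assume "dvdin ?P (fs i) ?g"
    then obtain j where j: "j < r" "j \<noteq> i" "dvdin ?P (fs i) (fs j)"
      using prime_dvd_prod[OF B prime, of "{..<r} - {i}" fs] fsP by auto
    then have "dvdin ?P (fs j) (fs i)" using prime_dvd_irred_imp_dvd[OF B prime irr] by blast
    then have "fs i \<sim>\<^bsub>poly_ring_n n\<^esub> fs j" using j unfolding associated_def divides_poly_ring_n by blast
    then show False using nonassoc[OF i j(1)] j(2) by blast
  qed
  moreover have "?g \<in> ?P" by (rule subr_prod[OF B]) (use fsP in auto)
  ultimately show ?thesis using prime a dvd unfolding primein_def divides_poly_ring_n by auto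
qed

section \<open>Derivations of a quotient by a product\<close>

lemma carrier_Quot_obtain:
  assumes "X \<in> carrier (R Quot I)"
  obtains x where "x \<in> carrier R" "X = I +>\<^bsub>R\<^esub> x"
  using assms unfolding FactRing_def A_RCOSETS_def RCOSETS_def a_r_coset_def by auto

text \<open>An additive map satisfying the Leibniz rule.\<close>
definition is_derivation :: "('a, 'b) ring_scheme \<Rightarrow> ('a \<Rightarrow> 'a) \<Rightarrow> bool" where
  "is_derivation A D \<longleftrightarrow>
     D \<in> carrier A \<rightarrow> carrier A \<and>
     (\<forall>x\<in>carrier A. \<forall>y\<in>carrier A. D (x \<oplus>\<^bsub>A\<^esub> y) = D x \<oplus>\<^bsub>A\<^esub> D y) \<and>
     (\<forall>x\<in>carrier A. \<forall>y\<in>carrier A. D (x \<otimes>\<^bsub>A\<^esub> y) = x \<otimes>\<^bsub>A\<^esub> D y \<oplus>\<^bsub>A\<^esub> D x \<otimes>\<^bsub>A\<^esub> y)"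

lemma is_C_derivation_imp_derivation: "is_C_derivation A emb D \<Longrightarrow> is_derivation A D"
  unfolding is_C_derivation_def is_derivation_def by blast

lemma (in ring) derivation_zero:
  assumes "is_derivation R D"
  shows "D \<zero> = \<zero>"
proof -
  have z: "D \<zero> \<in> carrier R" using assms unfolding is_derivation_def by auto
  have "D \<zero> \<oplus> D \<zero> = D (\<zero> \<oplus> \<zero>)"
    using assms unfolding is_derivation_def by (metis zero_closed)
  also have "\<dots> = D \<zero> \<oplus> \<zero>" using z by simp
  finally have "D \<zero> \<oplus> D \<zero> = D \<zero> \<oplus> \<zero>" .
  then show ?thesis using z by (simp add: add.l_cancel)
qed

text \<open>The heart of the argument: if \<open>f = p g\<close> in a commutative ring \<open>R\<close> and \<open>D\<close> is a derivation
  of \<open>R/(f)\<close>, then \<open>0 = D(p g) = p D(g) + D(p) g\<close> in \<open>R/(f)\<close>; lifting to \<open>R\<close> and using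
  \<open>p | f\<close> shows that any representative \<open>a\<close> of \<open>D(p)\<close> satisfies \<open>p | a g\<close>.\<close>
lemma (in cring) derivation_quotient_factor:
  assumes p: "p \<in> carrier R" and g: "g \<in> carrier R"
    and D: "is_derivation (R Quot (PIdl (p \<otimes> g))) D"
  shows "\<exists>a\<in>carrier R. D (PIdl (p \<otimes> g) +> p) = PIdl (p \<otimes> g) +> a \<and> p divides (a \<otimes> g)"
proof -
  define I where "I = PIdl (p \<otimes> g)"
  define A where "A = R Quot I"
  have f: "p \<otimes> g \<in> carrier R" using p g by simp
  interpret I: ideal I R unfolding I_def using cgenideal_ideal[OF f] .
  interpret A: ring A unfolding A_def by (rule I.quotient_is_ring)
  have hom: "(\<lambda>x. I +> x) \<in> ring_hom R A" unfolding A_def by (rule I.rcos_ring_hom)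
  have zeroA: "\<zero>\<^bsub>A\<^esub> = I" unfolding A_def FactRing_def by simp
  have D': "is_derivation A D" using D unfolding A_def I_def .
  have pA: "I +> p \<in> carrier A" and gA: "I +> g \<in> carrier A"
    using ring_hom_closed[OF hom] p g by auto
  obtain a where a: "a \<in> carrier R" "D (I +> p) = I +> a"
    using D' pA carrier_Quot_obtain[of "D (I +> p)" R I] unfolding A_def is_derivation_def by blast
  obtain b where b: "b \<in> carrier R" "D (I +> g) = I +> b"
    using D' gA carrier_Quot_obtain[of "D (I +> g)" R I] unfolding A_def is_derivation_def by blast
  have "(I +> p) \<otimes>\<^bsub>A\<^esub> (I +> g) = I +> (p \<otimes> g)"
    using ring_hom_mult[OF hom p g] by simp
  also have "\<dots> = \<zero>\<^bsub>A\<^esub>"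
    unfolding zeroA I_def using I.a_rcos_const cgenideal_self[OF f] I_def by blast
  finally have "\<zero>\<^bsub>A\<^esub> = D ((I +> p) \<otimes>\<^bsub>A\<^esub> (I +> g))" using A.derivation_zero[OF D'] by simp
  also have "\<dots> = (I +> p) \<otimes>\<^bsub>A\<^esub> (I +> b) \<oplus>\<^bsub>A\<^esub> (I +> a) \<otimes>\<^bsub>A\<^esub> (I +> g)"
    using D' pA gA a b unfolding is_derivation_def by simp
  also have "\<dots> = I +> (p \<otimes> b \<oplus> a \<otimes> g)"
    using p g a b by (simp add: ring_hom_add[OF hom] ring_hom_mult[OF hom])
  finally have "p \<otimes> b \<oplus> a \<otimes> g \<in> I"
    using I.rcos_const_imp_mem p g a b zeroA by simp
  then obtain c where c: "c \<in> carrier R" "p \<otimes> b \<oplus> a \<otimes> g = c \<otimes> (p \<otimes> g)"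
    unfolding I_def cgenideal_def by auto
  have "p \<otimes> (c \<otimes> g \<oplus> \<ominus> b) = c \<otimes> (p \<otimes> g) \<oplus> \<ominus> (p \<otimes> b)"
    using c(1) p g b(1) by (simp add: r_distr r_minus m_lcomm)
  also have "\<dots> = \<ominus> (p \<otimes> b) \<oplus> (p \<otimes> b \<oplus> a \<otimes> g)"
    using c p g a(1) b(1) by (simp add: a_comm)
  also have "\<dots> = a \<otimes> g" using p g a(1) b(1) by (simp add: r_neg1)
  finally have "a \<otimes> g = p \<otimes> (c \<otimes> g \<oplus> \<ominus> b)" ..
  then show ?thesis using a c p g b unfolding I_def factor_def by auto
qed

lemma (in cring) derivation_preserves_factor:
  assumes p: "p \<in> carrier R" and g: "g \<in> carrier R"
    and D: "is_derivation (R Quot (PIdl (p \<otimes> g))) D"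
    and coprime: "\<And>a. a \<in> carrier R \<Longrightarrow> p divides (a \<otimes> g) \<Longrightarrow> p divides a"
  shows "\<exists>b\<in>carrier (R Quot (PIdl (p \<otimes> g))).
           D (PIdl (p \<otimes> g) +> p) = (PIdl (p \<otimes> g) +> p) \<otimes>\<^bsub>R Quot (PIdl (p \<otimes> g))\<^esub> b"
proof -
  define I where "I = PIdl (p \<otimes> g)"
  have f: "p \<otimes> g \<in> carrier R" using p g by simp
  interpret I: ideal I R unfolding I_def using cgenideal_ideal[OF f] .
  have hom: "(\<lambda>x. I +> x) \<in> ring_hom R (R Quot I)" by (rule I.rcos_ring_hom)
  obtain a where a: "a \<in> carrier R" "D (I +> p) = I +> a" "p divides (a \<otimes> g)"
    using derivation_quotient_factor[OF p g D] unfolding I_def by blast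
  obtain t where t: "t \<in> carrier R" "a = p \<otimes> t"
    using coprime[OF a(1,3)] unfolding factor_def by blast
  have "D (I +> p) = (I +> p) \<otimes>\<^bsub>R Quot I\<^esub> (I +> t)"
    using a(2) t ring_hom_mult[OF hom p t(1)] by simp
  moreover have "I +> t \<in> carrier (R Quot I)" using ring_hom_closed[OF hom t(1)] .
  ultimately show ?thesis unfolding I_def by blast
qed

theorem corollary2p2:
  fixes n r :: nat and fs :: "nat \<Rightarrow> mpoly" and f :: mpoly and D :: "mpoly set \<Rightarrow> mpoly set"
  defines "R \<equiv> poly_ring_n n"
  defines "A \<equiv> R Quot (PIdl\<^bsub>R\<^esub> f)"
  assumes fs_carrier: "\<And>i. i < r \<Longrightarrow> fs i \<in> carrier R"
    and fs_irred: "\<And>i. i < r \<Longrightarrow> ring_irreducible\<^bsub>R\<^esub> (fs i)"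
    and fs_nonassoc: "\<And>i j. i < r \<Longrightarrow> j < r \<Longrightarrow> i \<noteq> j \<Longrightarrow> \<not> (fs i \<sim>\<^bsub>R\<^esub> fs j)"
    and f_prod: "f = (\<Prod>i<r. fs i)"
    and D_der: "is_C_derivation A (\<lambda>c. PIdl\<^bsub>R\<^esub> f +>\<^bsub>R\<^esub> const_poly c) D"
    and D_lnd: "locally_nilpotent A D"
  shows "\<forall>i<r. \<exists>b\<in>carrier A. D (PIdl\<^bsub>R\<^esub> f +>\<^bsub>R\<^esub> fs i) = (PIdl\<^bsub>R\<^esub> f +>\<^bsub>R\<^esub> fs i) \<otimes>\<^bsub>A\<^esub> b"
proof (intro allI impI)
  fix i assume i: "i < r"
  interpret R: cring R unfolding R_def by (rule cring_poly_ring_n)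
  define g where "g = (\<Prod>j\<in>{..<r} - {i}. fs j)"
  have "g \<in> polys_in n"
    unfolding g_def by (rule subr_prod[OF polys_in_subr]) (use fs_carrier R_def in auto)
  then have g: "g \<in> carrier R" unfolding R_def by simp
  have f_split: "f = fs i \<otimes>\<^bsub>R\<^esub> g"
    unfolding f_prod g_def R_def using i by (simp add: prod.remove)
  have "\<And>a. a \<in> carrier R \<Longrightarrow> fs i divides\<^bsub>R\<^esub> (a \<otimes>\<^bsub>R\<^esub> g) \<Longrightarrow> fs i divides\<^bsub>R\<^esub> a"
    using factor_coprime_product[where fs = fs, OF i] fs_carrier fs_irred fs_nonassoc
    unfolding g_def R_def by blast
  then show "\<exists>b\<in>carrier A. D (PIdl\<^bsub>R\<^esub> f +>\<^bsub>R\<^esub> fs i) = (PIdl\<^bsub>R\<^esub> f +>\<^bsub>R\<^esub> fs i) \<otimes>\<^bsub>A\<^esub> b"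
    using R.derivation_preserves_factor[OF fs_carrier[OF i] g]
      is_C_derivation_imp_derivation[OF D_der]
    unfolding A_def f_split by blast
qed

end
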